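(* Let $G$ be a group, let $N$ be a normal subgroup of $G$, and let $S=\bigoplus_{g\in G}S_g$ be an epsilon-strongly $G$-graded ring, with $\epsilon_g$ the multiplicative identity element of $S_gS_{g^{-1}}$. Consider the induced $G/N$-grading $\{S_C\}_{C\in G/N}$ of $S$. Then: (a) For each $C\in G/N$, the set $E_C=\bigvee\{\epsilon_g\mid g\in C\}$ is a set of local units for the ring $S_CS_{C^{-1}}$. In particular, the induced $G/N$-grading is essentially epsilon-strong. (b) If for each $C\in G/N$ (i) the poset $(E_C,\le)$ contains no infinite chain and (ii) the maximal elements of $(E_C,\le)$ are pairwise orthogonal, then the induced $G/N$-grading is virtually epsilon-strong.
   Context: Rings are associative, not necessarily unital; $AB$ denotes finite sums of products. A $G$-grading of $S$: $S=\bigoplus_{g\in G}S_g$, $S_gS_h\subseteq S_{gh}$. Symmetric: $S_gS_{g^{-1}}S_g=S_g$ for all $g$. Epsilon-strong: symmetric and each $S_gS_{g^{-1}}$ is unital (identity $\epsilon_g$; these are central idempotents of $S_e$). Induced $G/N$-grading: $S_C=\bigoplus_{g\in C}S_g$. For a ring $R$, $E(R)$ is its set of idempotents with order $a\le b$ iff $a=ab=ba$, $a\vee b$ the least upper bound (for commuting $a,b$, $a\vee b=a+b-ab$), and $\bigvee F$ the set of finite joins of elements of $F$. A set of local units for $R$ is a $\vee$-closed subset $E\subseteq E(R)$ of pairwise commuting idempotents such that for each $r\in R$ there is $f\in E$ with $fr=rf=r$. $R$ has enough idempotents if there is a set $M$ of pairwise orthogonal, commuting idempotents of $R$ such that $\bigvee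 M$ is a set of local units for $R$. A symmetric grading $\{T_h\}_{h\in H}$ is essentially (resp. virtually) epsilon-strong if every ring $T_hT_{h^{-1}}$ has a set of local units (resp. has enough idempotents). *)

theory Defs
  imports "HOL-Algebra.Coset"
begin

text \<open>The ring S is the ambient type 'a of class ring (associative, not
necessarily unital). Subsets of 'a play the role of additive subgroups/subrings.\<close>

definition fin_sums :: "'a::ring set \<Rightarrow> 'a set" where
  "fin_sums X = {sum_list xs | xs. set xs \<subseteq> X}"

definition setmul :: "'a::ring set \<Rightarrow> 'a set \<Rightarrow> 'a set" where
  "setmul A B = fin_sums {a * b | a b. a \<in> A \<and> b \<in> B}"

definition add_subgroup :: "'a::ring set \<Rightarrow> bool" where
  "add_subgroup A \<longleftrightarrow> 0 \<in> A \<and> (\<forall>x\<in>A. \<forall>y\<in>A. x - y \<in> A)"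

definition graded :: "('h, 'm) monoid_scheme \<Rightarrow> ('h \<Rightarrow> 'a::ring set) \<Rightarrow> bool" where
  "graded H T \<longleftrightarrow>
     (\<forall>h\<in>carrier H. add_subgroup (T h)) \<and>
     (\<forall>g\<in>carrier H. \<forall>h\<in>carrier H. setmul (T g) (T h) \<subseteq> T (g \<otimes>\<^bsub>H\<^esub> h)) \<and>
     (\<forall>s::'a. \<exists>!f. (\<forall>h\<in>carrier H. f h \<in> T h) \<and> (\<forall>h. h \<notin> carrier H \<longrightarrow> f h = 0)
                   \<and> finite {h. f h \<noteq> 0} \<and> s = sum f {h. f h \<noteq> 0})"

definition symmetric_grading :: "('h, 'm) monoid_scheme \<Rightarrow> ('h \<Rightarrow> 'a::ring set) \<Rightarrow> bool" where
  "symmetric_grading H T \<longleftrightarrow> graded H T \<and>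
     (\<forall>h\<in>carrier H. setmul (setmul (T h) (T (inv\<^bsub>H\<^esub> h))) (T h) = T h)"

definition is_identity_of :: "'a::ring \<Rightarrow> 'a set \<Rightarrow> bool" where
  "is_identity_of e R \<longleftrightarrow> e \<in> R \<and> (\<forall>x\<in>R. e * x = x \<and> x * e = x)"

definition unital_set :: "'a::ring set \<Rightarrow> bool" where
  "unital_set R \<longleftrightarrow> (\<exists>e. is_identity_of e R)"

definition identity_of :: "'a::ring set \<Rightarrow> 'a" where
  "identity_of R = (THE e. is_identity_of e R)"

definition epsilon_strong :: "('h, 'm) monoid_scheme \<Rightarrow> ('h \<Rightarrow> 'a::ring set) \<Rightarrow> bool" where
  "epsilon_strong H T \<longleftrightarrow> symmetric_grading H T \<and>
     (\<forall>h\<in>carrier H. unital_set (setmul (T h) (T (inv\<^bsub>H\<^esub> h))))"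

definition eps :: "('h, 'm) monoid_scheme \<Rightarrow> ('h \<Rightarrow> 'a::ring set) \<Rightarrow> 'h \<Rightarrow> 'a" where
  "eps H T h = identity_of (setmul (T h) (T (inv\<^bsub>H\<^esub> h)))"

definition idempotents :: "'a::ring set \<Rightarrow> 'a set" where
  "idempotents R = {e \<in> R. e * e = e}"

definition idem_le :: "'a::ring \<Rightarrow> 'a \<Rightarrow> bool" where
  "idem_le a b \<longleftrightarrow> a = a * b \<and> a = b * a"

definition idem_join :: "'a::ring \<Rightarrow> 'a \<Rightarrow> 'a" where
  "idem_join a b = a + b - a * b"

inductive_set joins :: "'a::ring set \<Rightarrow> 'a set" for F where
  base: "x \<in> F \<Longrightarrow> x \<in> joins F"
| join: "x \<in> joins F \<Longrightarrow> y \<in> joins F \<Longrightarrow> idem_join x y \<in> joins F"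

definition local_units :: "'a::ring set \<Rightarrow> 'a set \<Rightarrow> bool" where
  "local_units R E \<longleftrightarrow> E \<subseteq> idempotents R \<and>
     (\<forall>a\<in>E. \<forall>b\<in>E. a * b = b * a) \<and>
     (\<forall>a\<in>E. \<forall>b\<in>E. idem_join a b \<in> E) \<and>
     (\<forall>r\<in>R. \<exists>f\<in>E. f * r = r \<and> r * f = r)"

definition has_local_units :: "'a::ring set \<Rightarrow> bool" where
  "has_local_units R \<longleftrightarrow> (\<exists>E. local_units R E)"

definition enough_idempotents :: "'a::ring set \<Rightarrow> bool" where
  "enough_idempotents R \<longleftrightarrow> (\<exists>M. M \<subseteq> idempotents R \<and>
     (\<forall>a\<in>M. \<forall>b\<in>M. a * b = b * a) \<and>
     (\<forall>a\<in>M. \<forall>b\<in>M. a \<noteq> b \<longrightarrow> a * b = 0) \<and>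
     local_units R (joins M))"

definition essentially_epsilon_strong :: "('h, 'm) monoid_scheme \<Rightarrow> ('h \<Rightarrow> 'a::ring set) \<Rightarrow> bool" where
  "essentially_epsilon_strong H T \<longleftrightarrow> symmetric_grading H T \<and>
     (\<forall>h\<in>carrier H. has_local_units (setmul (T h) (T (inv\<^bsub>H\<^esub> h))))"

definition virtually_epsilon_strong :: "('h, 'm) monoid_scheme \<Rightarrow> ('h \<Rightarrow> 'a::ring set) \<Rightarrow> bool" where
  "virtually_epsilon_strong H T \<longleftrightarrow> symmetric_grading H T \<and>
     (\<forall>h\<in>carrier H. enough_idempotents (setmul (T h) (T (inv\<^bsub>H\<^esub> h))))"

definition induced_grading :: "('g \<Rightarrow> 'a::ring set) \<Rightarrow> 'g set \<Rightarrow> 'a set" where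
  "induced_grading S C = fin_sums (\<Union>g\<in>C. S g)"

definition no_infinite_chain :: "'a::ring set \<Rightarrow> bool" where
  "no_infinite_chain E \<longleftrightarrow>
     \<not> (\<exists>X\<subseteq>E. infinite X \<and> (\<forall>a\<in>X. \<forall>b\<in>X. idem_le a b \<or> idem_le b a))"

definition maximal_elements :: "'a::ring set \<Rightarrow> 'a set" where
  "maximal_elements E = {e \<in> E. \<forall>f\<in>E. idem_le e f \<longrightarrow> f = e}"

definition pairwise_orthogonal :: "'a::ring set \<Rightarrow> bool" where
  "pairwise_orthogonal M \<longleftrightarrow> (\<forall>a\<in>M. \<forall>b\<in>M. a \<noteq> b \<longrightarrow> a * b = 0 \<and> b * a = 0)"

end

theory Submission
  imports Defs
begin

text \<open>Each element of \<open>S\<^sub>C S\<^sub>C\<^sub>\<inverse>\<close> is a sum of products \<open>x y\<close> with \<open>x \<in> S\<^sub>g\<close>, \<open>y \<in> S\<^sub>h\<close>,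
  \<open>g \<in> C\<close>, \<open>h\<inverse> \<in> C\<close>. Since \<open>\<epsilon>\<^sub>g x = x\<close> and \<open>y \<epsilon>\<^sub>h\<^sub>\<inverse> = y\<close>, and the \<open>\<epsilon>\<close>'s are commuting
  idempotents (they are central in \<open>S\<^sub>e\<close>), the join \<open>\<epsilon>\<^sub>g \<or> \<epsilon>\<^sub>h\<^sub>\<inverse>\<close> is a two-sided unit for
  \<open>x y\<close>; joining the units of the summands gives a unit for the sum. For (b), without
  infinite chains every element of \<open>E\<^sub>C\<close> lies below a maximal one, so the (orthogonal)
  maximal elements alone already generate a set of local units.\<close>

section \<open>Finite sums and products of sets of ring elements\<close>

lemma fin_sums_zero [simp]: "0 \<in> fin_sums X"
  unfolding fin_sums_def by (rule CollectI, rule exI[of _ "[]"]) simp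

lemma fin_sums_base: "x \<in> X \<Longrightarrow> x \<in> fin_sums X"
  unfolding fin_sums_def by (rule CollectI, rule exI[of _ "[x]"]) simp

lemma fin_sums_add:
  assumes "a \<in> fin_sums X" "b \<in> fin_sums X"
  shows "a + b \<in> fin_sums X"
proof -
  obtain xs ys where "a = sum_list xs" "set xs \<subseteq> X" "b = sum_list ys" "set ys \<subseteq> X"
    using assms unfolding fin_sums_def by blast
  then show ?thesis unfolding fin_sums_def by (intro CollectI exI[of _ "xs @ ys"]) auto
qed

lemma fin_sums_induct [consumes 1, case_names zero base add]:
  assumes "y \<in> fin_sums X" "P 0" "\<And>x. x \<in> X \<Longrightarrow> P x"
    "\<And>a b. a \<in> fin_sums X \<Longrightarrow> b \<in> fin_sums X \<Longrightarrow> P a \<Longrightarrow> P b \<Longrightarrow> P (a + b)"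
  shows "P y"
proof -
  obtain xs where xs: "y = sum_list xs" "set xs \<subseteq> X"
    using assms(1) unfolding fin_sums_def by blast
  have "sum_list xs \<in> fin_sums X \<and> P (sum_list xs)" using xs(2)
  proof (induction xs)
    case (Cons x xs)
    then show ?case using assms(3,4) fin_sums_base fin_sums_add by fastforce
  qed (use assms(2) in simp)
  then show ?thesis using xs by simp
qed

lemma fin_sums_subset: "X \<subseteq> fin_sums Y \<Longrightarrow> fin_sums X \<subseteq> fin_sums Y"
  by (auto elim: fin_sums_induct intro: fin_sums_add)

lemma fin_sums_mono: "X \<subseteq> Y \<Longrightarrow> fin_sums X \<subseteq> fin_sums Y"
  by (rule fin_sums_subset) (auto intro: fin_sums_base)

lemma fin_sums_fin_sums [simp]: "fin_sums (fin_sums X) = fin_sums X"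
  by (rule equalityI, rule fin_sums_subset) (auto intro: fin_sums_base)

lemma fin_sums_sum:
  "finite A \<Longrightarrow> (\<And>i. i \<in> A \<Longrightarrow> f i \<in> fin_sums X) \<Longrightarrow> sum f A \<in> fin_sums X"
  by (induction A rule: finite_induct) (auto intro: fin_sums_add)

lemma fin_sums_uminus:
  assumes "\<And>x. x \<in> X \<Longrightarrow> - x \<in> X" and "y \<in> fin_sums X"
  shows "- y \<in> fin_sums X"
  using assms(2)
proof (induction rule: fin_sums_induct)
  case (add a b)
  then show ?case using fin_sums_add[of "- a" X "- b"] by simp
qed (auto intro: assms(1) fin_sums_base)

lemma setmul_memI: "a \<in> A \<Longrightarrow> b \<in> B \<Longrightarrow> a * b \<in> setmul A B"
  unfolding setmul_def by (rule fin_sums_base) blast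

lemma setmul_add: "a \<in> setmul A B \<Longrightarrow> b \<in> setmul A B \<Longrightarrow> a + b \<in> setmul A B"
  unfolding setmul_def by (rule fin_sums_add)

lemma setmul_zero [simp]: "0 \<in> setmul A B"
  unfolding setmul_def by simp

lemma fin_sums_setmul [simp]: "fin_sums (setmul A B) = setmul A B"
  unfolding setmul_def by simp

lemma setmul_induct [consumes 1, case_names zero prod add]:
  assumes "y \<in> setmul A B" "P 0" "\<And>a b. a \<in> A \<Longrightarrow> b \<in> B \<Longrightarrow> P (a * b)"
    "\<And>a b. a \<in> setmul A B \<Longrightarrow> b \<in> setmul A B \<Longrightarrow> P a \<Longrightarrow> P b \<Longrightarrow> P (a + b)"
  shows "P y"
  using assms(1) unfolding setmul_def
  by (induction rule: fin_sums_induct) (use assms(2-4) in \<open>auto simp: setmul_def\<close>)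

lemma setmul_mono: "A \<subseteq> A' \<Longrightarrow> B \<subseteq> B' \<Longrightarrow> setmul A B \<subseteq> setmul A' B'"
  unfolding setmul_def by (rule fin_sums_mono) blast

lemma setmul_fin_sums_memI:
  assumes "a \<in> fin_sums A" "b \<in> fin_sums B"
  shows "a * b \<in> setmul A B"
  using assms(1)
proof (induction rule: fin_sums_induct)
  case (base x)
  show ?case using assms(2)
    by (induction rule: fin_sums_induct)
      (auto simp: distrib_left intro: setmul_add setmul_memI base)
qed (auto simp: distrib_right intro: setmul_add)

lemma setmul_fin_sums_subset:
  assumes "setmul A B \<subseteq> C" "fin_sums C = C"
  shows "setmul (fin_sums A) (fin_sums B) \<subseteq> C"
proof -
  have "setmul (fin_sums A) (fin_sums B) \<subseteq> fin_sums C"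
    unfolding setmul_def[of "fin_sums A"]
    by (rule fin_sums_subset) (use setmul_fin_sums_memI assms(1) in \<open>blast intro: fin_sums_base\<close>)
  then show ?thesis using assms(2) by simp
qed

lemma setmul_assoc: "setmul (setmul A B) C = setmul A (setmul B C)"
proof
  show "setmul (setmul A B) C \<subseteq> setmul A (setmul B C)"
  proof
    fix y assume "y \<in> setmul (setmul A B) C"
    then show "y \<in> setmul A (setmul B C)"
    proof (induction rule: setmul_induct)
      case (prod x c)
      from prod(1) show ?case
        by (induction rule: setmul_induct)
          (auto simp: distrib_right mult.assoc intro: setmul_add setmul_memI prod(2))
    qed (auto intro: setmul_add)
  qed
  show "setmul A (setmul B C) \<subseteq> setmul (setmul A B) C"
  proof
    fix y assume "y \<in> setmul A (setmul B C)"
    then show "y \<in> setmul (setmul A B) C"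
    proof (induction rule: setmul_induct)
      case (prod a x)
      from prod(2) show ?case
        by (induction rule: setmul_induct)
          (auto simp: distrib_left mult.assoc[symmetric] intro: setmul_add setmul_memI prod(1))
    qed (auto intro: setmul_add)
  qed
qed

section \<open>Joins of commuting idempotents\<close>

lemma idem_join_left_unit1:
  "(a::'a::ring) * b = b * a \<Longrightarrow> a * y = y \<Longrightarrow> idem_join a b * y = y"
  unfolding idem_join_def by (simp add: algebra_simps mult.assoc[symmetric])

lemma idem_join_left_unit2: "(b::'a::ring) * y = y \<Longrightarrow> idem_join a b * y = y"
  unfolding idem_join_def by (simp add: algebra_simps)

lemma idem_join_right_unit1: "(y::'a::ring) * a = y \<Longrightarrow> y * idem_join a b = y"
  unfolding idem_join_def by (simp add: algebra_simps mult.assoc[symmetric])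

lemma idem_join_right_unit2:
  assumes "(a::'a::ring) * b = b * a" "y * b = y"
  shows "y * idem_join a b = y"
proof -
  have "y * (a * b) = y * a" using assms by (simp add: mult.assoc[symmetric])
  then show ?thesis unfolding idem_join_def using assms(2) by (simp add: algebra_simps)
qed

lemma idem_join_idem:
  assumes "(a::'a::ring) * a = a" "b * b = b" "a * b = b * a"
  shows "idem_join a b * idem_join a b = idem_join a b"
proof -
  have "a * (a * b) = a * b" "b * (a * b) = a * b" "a * b * a = a * b" "a * b * b = a * b"
    using assms by (metis mult.assoc)+
  moreover have "a * b * (a * b) = a * b"
    by (metis \<open>a * b * a = a * b\<close> \<open>a * b * b = a * b\<close> mult.assoc)
  ultimately show ?thesis
    unfolding idem_join_def using assms by (simp add: algebra_simps)
qed

lemma idem_join_commute: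
  "(x::'a::ring) * a = a * x \<Longrightarrow> x * b = b * x \<Longrightarrow> x * idem_join a b = idem_join a b * x"
  unfolding idem_join_def by (simp add: algebra_simps) (metis mult.assoc)

lemma joins_commute:
  assumes "\<And>f. f \<in> F \<Longrightarrow> x * f = f * x" and "y \<in> joins F"
  shows "x * y = y * x"
  using assms(2) by (induction rule: joins.induct) (auto intro: assms(1) idem_join_commute)

lemma joins_pairwise_commute:
  assumes "\<And>a b. a \<in> F \<Longrightarrow> b \<in> F \<Longrightarrow> a * b = b * a" and "x \<in> joins F" "y \<in> joins F"
  shows "x * y = y * x"
proof -
  have "x * f = f * x" if "f \<in> F" for f
    using joins_commute[OF assms(1)[OF that] assms(2)] by simp
  then show ?thesis using joins_commute[OF _ assms(3)] by blast
qed

lemma joins_idem: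
  assumes "\<And>a. a \<in> F \<Longrightarrow> a * a = a" "\<And>a b. a \<in> F \<Longrightarrow> b \<in> F \<Longrightarrow> a * b = b * a"
    and "x \<in> joins F"
  shows "x * x = x"
  using assms(3)
  by (induction rule: joins.induct)
    (auto intro: assms(1) idem_join_idem joins_pairwise_commute[OF assms(2)])

lemma joins_least:
  assumes "F \<subseteq> A" "\<And>a b. a \<in> A \<Longrightarrow> b \<in> A \<Longrightarrow> idem_join a b \<in> A"
  shows "joins F \<subseteq> A"
proof
  fix x assume "x \<in> joins F"
  then show "x \<in> A" by (induction rule: joins.induct) (use assms in auto)
qed

definition has_unit_in :: "'a::ring set \<Rightarrow> 'a \<Rightarrow> bool" where
  "has_unit_in E r \<longleftrightarrow> (\<exists>f\<in>E. f * r = r \<and> r * f = r)"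

lemma has_unit_in_zero: "e \<in> E \<Longrightarrow> has_unit_in E 0"
  unfolding has_unit_in_def by auto

lemma has_unit_in_add:
  assumes comm: "\<And>a b. a \<in> E \<Longrightarrow> b \<in> E \<Longrightarrow> a * b = b * a"
    and join: "\<And>a b. a \<in> E \<Longrightarrow> b \<in> E \<Longrightarrow> idem_join a b \<in> E"
    and "has_unit_in E x" "has_unit_in E y"
  shows "has_unit_in E (x + y)"
proof -
  obtain f1 where f1: "f1 \<in> E" "f1 * x = x" "x * f1 = x"
    using assms(3) unfolding has_unit_in_def by blast
  obtain f2 where f2: "f2 \<in> E" "f2 * y = y" "y * f2 = y"
    using assms(4) unfolding has_unit_in_def by blast
  have c: "f1 * f2 = f2 * f1" by (rule comm[OF f1(1) f2(1)])
  have "idem_join f1 f2 * (x + y) = x + y"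
    by (simp only: distrib_left idem_join_left_unit1[OF c f1(2)] idem_join_left_unit2[OF f2(2)])
  moreover have "(x + y) * idem_join f1 f2 = x + y"
    by (simp only: distrib_right idem_join_right_unit1[OF f1(3)] idem_join_right_unit2[OF c f2(3)])
  ultimately show ?thesis unfolding has_unit_in_def using join[OF f1(1) f2(1)] by blast
qed

lemma idem_le_trans: "idem_le (a::'a::ring) b \<Longrightarrow> idem_le b c \<Longrightarrow> idem_le a c"
  unfolding idem_le_def by (metis mult.assoc)

lemma idem_le_antisym: "idem_le (a::'a::ring) b \<Longrightarrow> idem_le b a \<Longrightarrow> a = b"
  unfolding idem_le_def by metis

lemma no_infinite_chain_maximal_above:
  fixes X :: "'a::ring set"
  assumes nic: "no_infinite_chain X" and e: "e \<in> X" and idem: "\<And>x. x \<in> X \<Longrightarrow> x * x = x"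
  shows "\<exists>m\<in>maximal_elements X. idem_le e m"
proof (rule ccontr)
  assume no_max: "\<not> (\<exists>m\<in>maximal_elements X. idem_le e m)"
  let ?U = "{x \<in> X. idem_le e x}"
  have refl: "idem_le x x" if "x \<in> X" for x using idem[OF that] unfolding idem_le_def by simp
  have larger: "\<exists>y. y \<in> ?U \<and> idem_le x y \<and> y \<noteq> x" if x: "x \<in> ?U" for x
  proof -
    obtain y where y: "y \<in> X" "idem_le x y" "y \<noteq> x"
      using no_max x unfolding maximal_elements_def by blast
    then show ?thesis using x idem_le_trans by blast
  qed
  define next_up where "next_up x = (SOME y. y \<in> ?U \<and> idem_le x y \<and> y \<noteq> x)" for x
  have next_up: "next_up x \<in> ?U \<and> idem_le x (next_up x) \<and> next_up x \<noteq> x" if "x \<in> ?U" for x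
    unfolding next_up_def by (rule someI_ex[OF larger[OF that]])
  \<comment> \<open>Iterating the choice of a strictly larger element produces an infinite chain.\<close>
  define f where "f n = (next_up ^^ n) e" for n
  have fU: "f n \<in> ?U" for n
    by (induction n) (use e refl next_up in \<open>auto simp: f_def\<close>)
  have f_step: "idem_le (f n) (f (Suc n))" "f (Suc n) \<noteq> f n" for n
    using next_up[OF fU[of n]] by (simp_all add: f_def)
  have f_mono: "idem_le (f i) (f j)" if "i \<le> j" for i j
    using that
  proof (induction j rule: dec_induct)
    case base then show ?case using fU refl by blast
  next
    case (step j) then show ?case using f_step idem_le_trans by blast
  qed
  have "inj f"
  proof (rule injI, rule ccontr)
    fix i j assume "f i = f j" "i \<noteq> j"
    then obtain a b where ab: "a < b" "f a = f b" by (metis linorder_neqE_nat)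
    have "idem_le (f (Suc a)) (f a)" using f_mono[of "Suc a" b] ab by simp
    then show False using idem_le_antisym f_step[of a] by blast
  qed
  then have "infinite (range f)" using finite_imageD[of f UNIV] by auto
  moreover have "range f \<subseteq> X" using fU by blast
  moreover have "\<forall>a\<in>range f. \<forall>b\<in>range f. idem_le a b \<or> idem_le b a"
    using f_mono nat_le_linear by blast
  ultimately show False using nic unfolding no_infinite_chain_def by blast
qed

lemma enough_idempotentsI:
  assumes lu: "local_units R E" and nic: "no_infinite_chain E"
    and orth: "pairwise_orthogonal (maximal_elements E)"
  shows "enough_idempotents R"
proof -
  let ?M = "maximal_elements E"
  have E_idem: "E \<subseteq> idempotents R" and E_comm: "\<forall>a\<in>E. \<forall>b\<in>E. a * b = b * a"
    and E_join: "\<forall>a\<in>E. \<forall>b\<in>E. idem_join a b \<in> E"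
    and E_unit: "\<forall>r\<in>R. \<exists>f\<in>E. f * r = r \<and> r * f = r"
    using lu unfolding local_units_def by blast+
  have idem: "x * x = x" if "x \<in> E" for x
    using E_idem that unfolding idempotents_def by blast
  have M_E: "?M \<subseteq> E" unfolding maximal_elements_def by blast
  have joins_M: "joins ?M \<subseteq> E" by (rule joins_least[OF M_E]) (use E_join in blast)
  have M_unit: "\<exists>m\<in>joins ?M. m * r = r \<and> r * m = r" if r: "r \<in> R" for r
  proof -
    obtain f where f: "f \<in> E" "f * r = r" "r * f = r" using E_unit r by blast
    obtain m where m: "m \<in> ?M" "idem_le f m"
      using no_infinite_chain_maximal_above[OF nic f(1) idem] by blast
    then have "f = m * f" "f = f * m" unfolding idem_le_def by blast+
    then have "m * r = r" "r * m = r"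
      using f(2,3) mult.assoc[of m f r] mult.assoc[of r f m] by simp_all
    then show ?thesis using m(1) joins.base by blast
  qed
  have "local_units R (joins ?M)"
    unfolding local_units_def
  proof (intro conjI)
    show "joins ?M \<subseteq> idempotents R" using joins_M E_idem by blast
    show "\<forall>a\<in>joins ?M. \<forall>b\<in>joins ?M. a * b = b * a" using joins_M E_comm by blast
    show "\<forall>a\<in>joins ?M. \<forall>b\<in>joins ?M. idem_join a b \<in> joins ?M" using joins.join by blast
  qed (use M_unit in blast)
  moreover have "\<forall>a\<in>?M. \<forall>b\<in>?M. a \<noteq> b \<longrightarrow> a * b = 0"
    using orth unfolding pairwise_orthogonal_def by blast
  moreover have "?M \<subseteq> idempotents R" "\<forall>a\<in>?M. \<forall>b\<in>?M. a * b = b * a"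
    using M_E E_idem E_comm by blast+
  ultimately show ?thesis
    unfolding enough_idempotents_def by blast
qed

section \<open>Epsilon-strong gradings\<close>

definition homogeneous_decomposition ::
    "('h, 'm) monoid_scheme \<Rightarrow> ('h \<Rightarrow> 'a::ring set) \<Rightarrow> 'a \<Rightarrow> ('h \<Rightarrow> 'a) \<Rightarrow> bool" where
  "homogeneous_decomposition H T s f \<longleftrightarrow>
     (\<forall>h\<in>carrier H. f h \<in> T h) \<and> (\<forall>h. h \<notin> carrier H \<longrightarrow> f h = 0)
     \<and> finite {h. f h \<noteq> 0} \<and> s = sum f {h. f h \<noteq> 0}"

lemma graded_iff: "graded H T \<longleftrightarrow>
     (\<forall>h\<in>carrier H. add_subgroup (T h)) \<and>
     (\<forall>g\<in>carrier H. \<forall>h\<in>carrier H. setmul (T g) (T h) \<subseteq> T (g \<otimes>\<^bsub>H\<^esub> h)) \<and>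
     (\<forall>s. \<exists>!f. homogeneous_decomposition H T s f)"
  unfolding graded_def homogeneous_decomposition_def by simp

locale epsilon_strongly_graded = group G for G :: "('g, 'm) monoid_scheme" (structure) +
  fixes S :: "'g \<Rightarrow> 'r::ring set"
  assumes epsilon_strong: "epsilon_strong G S"
begin

lemma graded: "graded G S"
  and symmetric: "\<And>h. h \<in> carrier G \<Longrightarrow> setmul (setmul (S h) (S (inv h))) (S h) = S h"
  and unital: "\<And>h. h \<in> carrier G \<Longrightarrow> unital_set (setmul (S h) (S (inv h)))"
  using epsilon_strong unfolding epsilon_strong_def symmetric_grading_def by auto

lemma S_zero: "g \<in> carrier G \<Longrightarrow> 0 \<in> S g"
  and S_diff: "g \<in> carrier G \<Longrightarrow> x \<in> S g \<Longrightarrow> y \<in> S g \<Longrightarrow> x - y \<in> S g"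
  using graded unfolding graded_def add_subgroup_def by auto

lemma S_uminus: "g \<in> carrier G \<Longrightarrow> x \<in> S g \<Longrightarrow> - x \<in> S g"
  using S_diff[of g 0 x] S_zero by simp

lemma S_add: "g \<in> carrier G \<Longrightarrow> x \<in> S g \<Longrightarrow> y \<in> S g \<Longrightarrow> x + y \<in> S g"
  using S_diff[of g x "- y"] S_uminus by simp

lemma S_mult: "g \<in> carrier G \<Longrightarrow> h \<in> carrier G \<Longrightarrow> x \<in> S g \<Longrightarrow> y \<in> S h \<Longrightarrow> x * y \<in> S (g \<otimes> h)"
  using graded setmul_memI unfolding graded_def by blast

definition component :: "'r \<Rightarrow> 'g \<Rightarrow> 'r" where
  "component s = (THE f. homogeneous_decomposition G S s f)"

lemma component_decomposition: "homogeneous_decomposition G S s (component s)"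
  and component_unique: "homogeneous_decomposition G S s f \<Longrightarrow> component s = f"
  using graded theI'[of "homogeneous_decomposition G S s"] the1_equality[of "homogeneous_decomposition G S s" f]
  unfolding graded_iff component_def by blast+

lemma component_in: "h \<in> carrier G \<Longrightarrow> component s h \<in> S h"
  and component_out: "h \<notin> carrier G \<Longrightarrow> component s h = 0"
  and component_finite: "finite {h. component s h \<noteq> 0}"
  and sum_component: "sum (component s) {h. component s h \<noteq> 0} = s"
  using component_decomposition[of s] unfolding homogeneous_decomposition_def by auto

lemma sum_component_superset:
  assumes "finite A" "{h. component s h \<noteq> 0} \<subseteq> A"
  shows "sum (component s) A = s"
  using sum.mono_neutral_right[OF assms, of "component s"] sum_component[of s] by simp

lemma component_eqI:
  assumes "\<And>h. h \<in> carrier G \<Longrightarrow> f h \<in> S h" "\<And>h. h \<notin> carrier G \<Longrightarrow> f h = 0"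
    "finite A" "{h. f h \<noteq> 0} \<subseteq> A" "s = sum f A"
  shows "component s = f"
proof (rule component_unique)
  have "sum f A = sum f {h. f h \<noteq> 0}"
    by (rule sum.mono_neutral_right[OF assms(3,4)]) auto
  then show "homogeneous_decomposition G S s f"
    unfolding homogeneous_decomposition_def using assms finite_subset by auto
qed

lemma component_add: "component (x + y) = (\<lambda>h. component x h + component y h)"
proof (rule component_eqI[where A = "{h. component x h \<noteq> 0} \<union> {h. component y h \<noteq> 0}"])
  let ?A = "{h. component x h \<noteq> 0} \<union> {h. component y h \<noteq> 0}"
  have "finite ?A" using component_finite by blast
  then show "x + y = (\<Sum>h\<in>?A. component x h + component y h)"
    using sum_component_superset[of ?A] by (simp add: sum.distrib)
qed (auto simp: component_in component_out S_add component_finite)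

lemma component_zero: "component 0 = (\<lambda>h. 0)"
  by (rule component_eqI[where A = "{}"]) (auto simp: S_zero)

lemma component_sum:
  "finite I \<Longrightarrow> component (sum F I) = (\<lambda>h. \<Sum>i\<in>I. component (F i) h)"
  by (induction I rule: finite_induct) (auto simp: component_zero component_add)

lemma component_homogeneous:
  "g \<in> carrier G \<Longrightarrow> x \<in> S g \<Longrightarrow> component x = (\<lambda>h. if h = g then x else 0)"
  by (rule component_eqI[where A = "{g}"]) (auto simp: S_zero)

lemma eps_identity: "g \<in> carrier G \<Longrightarrow> is_identity_of (eps G S g) (setmul (S g) (S (inv g)))"
proof -
  assume g: "g \<in> carrier G"
  obtain e where e: "is_identity_of e (setmul (S g) (S (inv g)))"
    using unital[OF g] unfolding unital_set_def by blast
  have "e' = e" if "is_identity_of e' (setmul (S g) (S (inv g)))" for e'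
    using that e unfolding is_identity_of_def by metis
  then have "eps G S g = e"
    unfolding eps_def identity_of_def using e by (rule the_equality[rotated])
  then show ?thesis using e by simp
qed

lemma eps_mem: "g \<in> carrier G \<Longrightarrow> eps G S g \<in> setmul (S g) (S (inv g))"
  and eps_mult_left: "g \<in> carrier G \<Longrightarrow> y \<in> setmul (S g) (S (inv g)) \<Longrightarrow> eps G S g * y = y"
  and eps_mult_right: "g \<in> carrier G \<Longrightarrow> y \<in> setmul (S g) (S (inv g)) \<Longrightarrow> y * eps G S g = y"
  using eps_identity[of g] unfolding is_identity_of_def by simp_all

lemma eps_idem: "g \<in> carrier G \<Longrightarrow> eps G S g * eps G S g = eps G S g"
  using eps_mult_left eps_mem by blast

lemma eps_left_unit: "g \<in> carrier G \<Longrightarrow> x \<in> S g \<Longrightarrow> eps G S g * x = x"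
proof -
  assume g: "g \<in> carrier G" and "x \<in> S g"
  then have "x \<in> setmul (setmul (S g) (S (inv g))) (S g)" using symmetric by simp
  then show ?thesis
  proof (induction rule: setmul_induct)
    case (prod a b) then show ?case using eps_mult_left[OF g] by (simp add: mult.assoc[symmetric])
  qed (auto simp: distrib_left)
qed

lemma eps_inv_right_unit: "g \<in> carrier G \<Longrightarrow> x \<in> S g \<Longrightarrow> x * eps G S (inv g) = x"
proof -
  assume g: "g \<in> carrier G" and "x \<in> S g"
  then have "x \<in> setmul (S g) (setmul (S (inv g)) (S (inv (inv g))))"
    using symmetric[OF g] by (simp add: setmul_assoc)
  then show ?thesis
  proof (induction rule: setmul_induct)
    case (prod a b) then show ?case using eps_mult_right[of "inv g"] g by (simp add: mult.assoc)
  qed (auto simp: distrib_right)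
qed

lemma eps_in_S_one: "g \<in> carrier G \<Longrightarrow> eps G S g \<in> S \<one>"
proof -
  assume g: "g \<in> carrier G"
  have "setmul (S g) (S (inv g)) \<subseteq> S (g \<otimes> inv g)"
    using graded g unfolding graded_def by (meson inv_closed)
  then show ?thesis using eps_mem[OF g] g by auto
qed

lemma S_one_mult_left:
  assumes g: "g \<in> carrier G" and x: "x \<in> S \<one>" and y: "y \<in> setmul (S g) (S (inv g))"
  shows "x * y \<in> setmul (S g) (S (inv g))"
  using y
proof (induction rule: setmul_induct)
  case (prod a b)
  have "x * a \<in> S g" using S_mult[of \<one> g x a] g x prod by simp
  then show ?case using prod by (simp add: mult.assoc[symmetric] setmul_memI)
qed (auto simp: distrib_left intro: setmul_add)

lemma S_one_mult_right:
  assumes g: "g \<in> carrier G" and x: "x \<in> S \<one>" and y: "y \<in> setmul (S g) (S (inv g))"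
  shows "y * x \<in> setmul (S g) (S (inv g))"
  using y
proof (induction rule: setmul_induct)
  case (prod a b)
  have "b * x \<in> S (inv g)" using S_mult[of "inv g" \<one> b x] g x prod by simp
  then show ?case using prod by (simp add: mult.assoc setmul_memI)
qed (auto simp: distrib_right intro: setmul_add)

text \<open>\<open>S\<^sub>g S\<^sub>g\<^sub>\<inverse>\<close> is an ideal of \<open>S\<^sub>e\<close>, so its identity \<open>\<epsilon>\<^sub>g\<close> is central in \<open>S\<^sub>e\<close>.\<close>

lemma eps_commute: "g \<in> carrier G \<Longrightarrow> x \<in> S \<one> \<Longrightarrow> eps G S g * x = x * eps G S g"
proof -
  assume g: "g \<in> carrier G" and x: "x \<in> S \<one>"
  have "eps G S g * x = eps G S g * x * eps G S g"
    using eps_mult_right[OF g S_one_mult_right[OF g x eps_mem[OF g]]] by simp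
  also have "\<dots> = x * eps G S g"
    using eps_mult_left[OF g S_one_mult_left[OF g x eps_mem[OF g]]] by (simp add: mult.assoc)
  finally show ?thesis .
qed

lemma eps_eps_commute: "g \<in> carrier G \<Longrightarrow> h \<in> carrier G \<Longrightarrow> eps G S g * eps G S h = eps G S h * eps G S g"
  by (rule eps_commute[OF _ eps_in_S_one])

end

section \<open>The grading induced on a quotient group\<close>

locale epsilon_strongly_graded_normal = epsilon_strongly_graded G S
  for G :: "('g, 'm) monoid_scheme" (structure) and S :: "'g \<Rightarrow> 'r::ring set" +
  fixes N :: "'g set"
  assumes normal: "N \<lhd> G"
begin

sublocale normal N G by (rule normal)

abbreviation Q where "Q \<equiv> G Mod N"
abbreviation T where "T \<equiv> induced_grading S"

lemma Q_group: "group Q" by (rule factorgroup_is_group)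

lemma Q_inv_closed: "C \<in> carrier Q \<Longrightarrow> inv\<^bsub>Q\<^esub> C \<in> carrier Q"
  by (rule group.inv_closed[OF Q_group])

lemma Q_mult_closed: "C \<in> carrier Q \<Longrightarrow> D \<in> carrier Q \<Longrightarrow> C \<otimes>\<^bsub>Q\<^esub> D \<in> carrier Q"
  by (rule monoid.m_closed[OF group.is_monoid[OF Q_group]])

lemma Q_cancel:
  assumes "C \<in> carrier Q"
  shows "(C \<otimes>\<^bsub>Q\<^esub> inv\<^bsub>Q\<^esub> C) \<otimes>\<^bsub>Q\<^esub> C = C"
    and "(inv\<^bsub>Q\<^esub> C \<otimes>\<^bsub>Q\<^esub> C) \<otimes>\<^bsub>Q\<^esub> inv\<^bsub>Q\<^esub> C = inv\<^bsub>Q\<^esub> C"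
  using group.r_inv[OF Q_group assms] group.l_inv[OF Q_group assms]
    monoid.l_one[OF group.is_monoid[OF Q_group]] assms Q_inv_closed[OF assms] by metis+

lemma carrier_Q: "carrier Q = rcosets N" by (simp add: FactGroup_def)

lemma coset_subset_carrier: "C \<in> carrier Q \<Longrightarrow> C \<subseteq> carrier G"
  using carrier_Q rcosets_carrier is_group by auto

lemma rcos_in_carrier_Q: "g \<in> carrier G \<Longrightarrow> N #> g \<in> carrier Q \<and> g \<in> N #> g"
  using carrier_Q rcosetsI[OF subset] rcos_self[OF _ subgroup_axioms] by auto

lemma coset_eqI: "C \<in> carrier Q \<Longrightarrow> D \<in> carrier Q \<Longrightarrow> g \<in> C \<Longrightarrow> g \<in> D \<Longrightarrow> C = D"
  using rcos_disjoint[OF subgroup_axioms] carrier_Q unfolding pairwise_def disjnt_def by blast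

lemma coset_eq_rcos: "C \<in> carrier Q \<Longrightarrow> g \<in> C \<Longrightarrow> C = N #> g"
  using coset_eqI rcos_in_carrier_Q coset_subset_carrier by blast

lemma coset_nonempty: "C \<in> carrier Q \<Longrightarrow> \<exists>g. g \<in> C"
  using carrier_Q rcos_in_carrier_Q unfolding RCOSETS_def by blast

lemma inv_mem_inv_Q: "C \<in> carrier Q \<Longrightarrow> g \<in> C \<Longrightarrow> inv g \<in> inv\<^bsub>Q\<^esub> C"
  using inv_FactGroup unfolding SET_INV_def by auto

lemma inv_mem_of_mem_inv_Q: "C \<in> carrier Q \<Longrightarrow> h \<in> inv\<^bsub>Q\<^esub> C \<Longrightarrow> inv h \<in> C"
  using inv_FactGroup coset_subset_carrier unfolding SET_INV_def by fastforce

lemma mult_in_mult_Q: "g \<in> C \<Longrightarrow> h \<in> D \<Longrightarrow> g \<otimes> h \<in> C \<otimes>\<^bsub>Q\<^esub> D"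
  unfolding mult_FactGroup set_mult_def by auto

lemma S_subset_T: "g \<in> C \<Longrightarrow> S g \<subseteq> T C"
  unfolding induced_grading_def by (auto intro: fin_sums_base)

lemma fin_sums_T [simp]: "fin_sums (T C) = T C"
  unfolding induced_grading_def by simp

lemma T_zero: "0 \<in> T C"
  unfolding induced_grading_def by simp

lemma T_add: "x \<in> T C \<Longrightarrow> y \<in> T C \<Longrightarrow> x + y \<in> T C"
  unfolding induced_grading_def by (rule fin_sums_add)

lemma T_uminus: "C \<in> carrier Q \<Longrightarrow> x \<in> T C \<Longrightarrow> - x \<in> T C"
  unfolding induced_grading_def
  by (rule fin_sums_uminus) (use coset_subset_carrier S_uminus in blast)+

lemma T_setmul:
  assumes C: "C \<in> carrier Q" and D: "D \<in> carrier Q"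
  shows "setmul (T C) (T D) \<subseteq> T (C \<otimes>\<^bsub>Q\<^esub> D)"
  unfolding induced_grading_def[of S C] induced_grading_def[of S D]
proof (rule setmul_fin_sums_subset[OF _ fin_sums_T])
  have "a * b \<in> T (C \<otimes>\<^bsub>Q\<^esub> D)" if "g \<in> C" "a \<in> S g" "h \<in> D" "b \<in> S h" for a b g h
    using that S_mult[of g h a b] coset_subset_carrier[OF C] coset_subset_carrier[OF D]
      S_subset_T[OF mult_in_mult_Q, of g C h D] by blast
  then show "setmul (\<Union> (S ` C)) (\<Union> (S ` D)) \<subseteq> T (C \<otimes>\<^bsub>Q\<^esub> D)"
    unfolding setmul_def[of "\<Union> (S ` C)"]
    by (subst fin_sums_T[symmetric], intro fin_sums_mono) blast
qed

lemma component_T_outside: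
  assumes C: "C \<in> carrier Q" and "x \<in> T C" "h \<notin> C"
  shows "component x h = 0"
  using assms(2) unfolding induced_grading_def
proof (induction rule: fin_sums_induct)
  case zero then show ?case by (simp add: component_zero)
next
  case (base y) then obtain g where "g \<in> C" "y \<in> S g" by blast
  then show ?case using component_homogeneous[of g y] assms(3) coset_subset_carrier[OF C] by auto
next
  case (add a b) then show ?case by (simp add: component_add)
qed

definition coset_component :: "'r \<Rightarrow> 'g set \<Rightarrow> 'r" where
  "coset_component s C =
     (if C \<in> carrier Q then sum (component s) ({h. component s h \<noteq> 0} \<inter> C) else 0)"

lemma coset_component_decomposition: "homogeneous_decomposition Q T s (coset_component s)"
proof -
  let ?A = "{h. component s h \<noteq> 0}"
  let ?I = "(\<lambda>g. N #> g) ` ?A"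
  have finA: "finite ?A" by (rule component_finite)
  have A_carrier: "?A \<subseteq> carrier G" using component_out by blast
  have in_T: "coset_component s C \<in> T C" if C: "C \<in> carrier Q" for C
  proof -
    have "sum (component s) (?A \<inter> C) \<in> fin_sums (T C)"
    proof (rule fin_sums_sum)
      fix i assume i: "i \<in> ?A \<inter> C"
      then have "component s i \<in> S i" using component_in coset_subset_carrier[OF C] by blast
      then show "component s i \<in> fin_sums (T C)" using S_subset_T[of i C] i by auto
    qed (use finA in auto)
    then show ?thesis using C unfolding coset_component_def by simp
  qed
  have support: "{C. coset_component s C \<noteq> 0} \<subseteq> ?I"
  proof
    fix C assume "C \<in> {C. coset_component s C \<noteq> 0}"
    then have C: "C \<in> carrier Q" and "?A \<inter> C \<noteq> {}"
      unfolding coset_component_def by (auto split: if_splits)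
    then obtain g where "g \<in> ?A" "g \<in> C" by blast
    then show "C \<in> ?I" using coset_eq_rcos[OF C] by blast
  qed
  have "sum (coset_component s) {C. coset_component s C \<noteq> 0} = sum (coset_component s) ?I"
    by (rule sum.mono_neutral_left[OF _ support]) (use finA in auto)
  also have "\<dots> = (\<Sum>C\<in>?I. sum (component s) (?A \<inter> C))"
    by (rule sum.cong) (use rcos_in_carrier_Q A_carrier in \<open>auto simp: coset_component_def\<close>)
  also have "\<dots> = sum (component s) (\<Union>C\<in>?I. ?A \<inter> C)"
  proof (rule sum.UNION_disjoint[symmetric])
    show "\<forall>i\<in>?I. \<forall>j\<in>?I. i \<noteq> j \<longrightarrow> ?A \<inter> i \<inter> (?A \<inter> j) = {}"
      using coset_eqI rcos_in_carrier_Q A_carrier by blast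
  qed (use finA in auto)
  also have "(\<Union>C\<in>?I. ?A \<inter> C) = ?A" using rcos_in_carrier_Q A_carrier by blast
  finally have "sum (coset_component s) {C. coset_component s C \<noteq> 0} = s"
    using sum_component by simp
  then show ?thesis
    unfolding homogeneous_decomposition_def using in_T support finite_subset[OF support] finA
    by (auto simp: coset_component_def)
qed

lemma component_of_coset_decomposition:
  assumes F: "homogeneous_decomposition Q T s F" and C: "C \<in> carrier Q" and h: "h \<in> C"
  shows "component s h = component (F C) h"
proof -
  have F_in: "\<And>D. D \<in> carrier Q \<Longrightarrow> F D \<in> T D" and F_out: "\<And>D. D \<notin> carrier Q \<Longrightarrow> F D = 0"
    and F_fin: "finite {D. F D \<noteq> 0}" and F_sum: "s = sum F {D. F D \<noteq> 0}"
    using F unfolding homogeneous_decomposition_def by auto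
  let ?B = "insert C {D. F D \<noteq> 0}"
  have finB: "finite ?B" using F_fin by simp
  have "sum F {D. F D \<noteq> 0} = sum F ?B" by (rule sum.mono_neutral_left[OF finB]) auto
  then have "s = sum F ?B" using F_sum by simp
  then have "component s h = (\<Sum>D\<in>?B. component (F D) h)"
    using component_sum[OF finB, of F] by simp
  also have "\<dots> = component (F C) h + (\<Sum>D\<in>?B - {C}. component (F D) h)"
    by (subst sum.remove[OF finB insertI1]) (rule refl)
  also have "(\<Sum>D\<in>?B - {C}. component (F D) h) = 0"
  proof (rule sum.neutral, rule ballI)
    fix D assume "D \<in> ?B - {C}"
    then have "F D \<noteq> 0" "D \<noteq> C" by auto
    then have D: "D \<in> carrier Q" "D \<noteq> C" using F_out by blast+
    then have "h \<notin> D" using coset_eqI[OF C D(1) h] by blast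
    then show "component (F D) h = 0" using component_T_outside[OF D(1) F_in[OF D(1)]] by blast
  qed
  finally show ?thesis by simp
qed

lemma coset_component_unique:
  assumes F: "homogeneous_decomposition Q T s F"
  shows "F = coset_component s"
proof (rule ext)
  fix C
  have F_in: "\<And>D. D \<in> carrier Q \<Longrightarrow> F D \<in> T D" and F_out: "\<And>D. D \<notin> carrier Q \<Longrightarrow> F D = 0"
    using F unfolding homogeneous_decomposition_def by auto
  show "F C = coset_component s C"
  proof (cases "C \<in> carrier Q")
    case False then show ?thesis using F_out by (simp add: coset_component_def)
  next
    case C: True
    let ?A = "({h. component s h \<noteq> 0} \<union> {h. component (F C) h \<noteq> 0}) \<inter> C"
    have finA: "finite ?A" using component_finite by blast
    have "sum (component (F C)) ?A = F C"
      by (rule sum_component_superset[OF finA]) (use component_T_outside[OF C F_in[OF C]] in blast)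
    then have "F C = sum (component (F C)) ?A" by simp
    also have "\<dots> = sum (component s) ?A"
      using component_of_coset_decomposition[OF F C] by (intro sum.cong) auto
    also have "\<dots> = sum (component s) ({h. component s h \<noteq> 0} \<inter> C)"
      by (rule sum.mono_neutral_right[OF finA]) auto
    finally show ?thesis using C by (simp add: coset_component_def)
  qed
qed

lemma T_graded: "graded Q T"
  unfolding graded_iff
proof (intro conjI ballI allI)
  fix C assume "C \<in> carrier Q"
  then show "add_subgroup (T C)"
    unfolding add_subgroup_def using T_zero T_add T_uminus by (metis diff_conv_add_uminus)
next
  fix C D assume "C \<in> carrier Q" "D \<in> carrier Q"
  then show "setmul (T C) (T D) \<subseteq> T (C \<otimes>\<^bsub>Q\<^esub> D)" by (rule T_setmul)
next
  fix s show "\<exists>!F. homogeneous_decomposition Q T s F"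
    using coset_component_decomposition coset_component_unique by blast
qed

lemma T_symmetric: "symmetric_grading Q T"
  unfolding symmetric_grading_def
proof (intro conjI ballI T_graded equalityI)
  fix C assume C: "C \<in> carrier Q"
  have "setmul (setmul (T C) (T (inv\<^bsub>Q\<^esub> C))) (T C) \<subseteq> setmul (T (C \<otimes>\<^bsub>Q\<^esub> inv\<^bsub>Q\<^esub> C)) (T C)"
    by (rule setmul_mono[OF T_setmul[OF C Q_inv_closed[OF C]] order.refl])
  also have "\<dots> \<subseteq> T ((C \<otimes>\<^bsub>Q\<^esub> inv\<^bsub>Q\<^esub> C) \<otimes>\<^bsub>Q\<^esub> C)"
    by (rule T_setmul[OF Q_mult_closed[OF C Q_inv_closed[OF C]] C])
  also have "(C \<otimes>\<^bsub>Q\<^esub> inv\<^bsub>Q\<^esub> C) \<otimes>\<^bsub>Q\<^esub> C = C"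
    by (rule Q_cancel(1)[OF C])
  finally show "setmul (setmul (T C) (T (inv\<^bsub>Q\<^esub> C))) (T C) \<subseteq> T C" .
  let ?X = "setmul (setmul (T C) (T (inv\<^bsub>Q\<^esub> C))) (T C)"
  have "S g \<subseteq> ?X" if g: "g \<in> C" for g
  proof -
    have "S g = setmul (setmul (S g) (S (inv g))) (S g)"
      using symmetric g coset_subset_carrier[OF C] by blast
    also have "\<dots> \<subseteq> ?X"
      by (intro setmul_mono S_subset_T g inv_mem_inv_Q[OF C g] order.refl)
    finally show ?thesis .
  qed
  then have "fin_sums (\<Union> (S ` C)) \<subseteq> fin_sums ?X" by (intro fin_sums_mono) blast
  then show "T C \<subseteq> ?X" unfolding induced_grading_def[of S C] by simp
qed

abbreviation R where "R C \<equiv> setmul (T C) (T (inv\<^bsub>Q\<^esub> C))"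
abbreviation E where "E C \<equiv> joins (eps G S ` C)"

lemma R_uminus:
  assumes C: "C \<in> carrier Q" and "y \<in> R C"
  shows "- y \<in> R C"
  using assms(2)
proof (induction rule: setmul_induct)
  case (prod a b)
  then show ?case using setmul_memI[OF T_uminus[OF C prod(1)] prod(2)] by simp
next
  case (add a b)
  then show ?case using setmul_add[of "- a" _ _ "- b"] by simp
qed simp

lemma R_mult:
  assumes C: "C \<in> carrier Q" and "x \<in> R C" "y \<in> R C"
  shows "x * y \<in> R C"
proof -
  let ?Ci = "inv\<^bsub>Q\<^esub> C"
  have Ci: "?Ci \<in> carrier Q" using Q_inv_closed[OF C] .
  have "setmul (setmul (T ?Ci) (T C)) (T ?Ci) \<subseteq> setmul (T (?Ci \<otimes>\<^bsub>Q\<^esub> C)) (T ?Ci)"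
    by (rule setmul_mono[OF T_setmul[OF Ci C] order.refl])
  also have "\<dots> \<subseteq> T ((?Ci \<otimes>\<^bsub>Q\<^esub> C) \<otimes>\<^bsub>Q\<^esub> ?Ci)"
    by (rule T_setmul[OF Q_mult_closed[OF Ci C] Ci])
  also have "(?Ci \<otimes>\<^bsub>Q\<^esub> C) \<otimes>\<^bsub>Q\<^esub> ?Ci = ?Ci"
    by (rule Q_cancel(2)[OF C])
  finally have "setmul (setmul (T ?Ci) (T C)) (T ?Ci) \<subseteq> T ?Ci" .
  then have "setmul (R C) (R C) \<subseteq> R C"
    by (simp add: setmul_assoc setmul_mono)
  then show ?thesis using setmul_memI[OF assms(2,3)] by blast
qed

lemma E_subset_R:
  assumes C: "C \<in> carrier Q"
  shows "E C \<subseteq> R C"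
proof (rule joins_least)
  show "eps G S ` C \<subseteq> R C"
  proof
    fix e assume "e \<in> eps G S ` C"
    then obtain g where g: "g \<in> C" "e = eps G S g" by blast
    have "setmul (S g) (S (inv g)) \<subseteq> R C"
      by (rule setmul_mono[OF S_subset_T[OF g(1)] S_subset_T[OF inv_mem_inv_Q[OF C g(1)]]])
    then show "e \<in> R C" using eps_mem g coset_subset_carrier[OF C] by blast
  qed
  show "idem_join a b \<in> R C" if "a \<in> R C" "b \<in> R C" for a b
  proof -
    have "idem_join a b = a + b + - (a * b)" unfolding idem_join_def by simp
    then show ?thesis using that R_mult[OF C] R_uminus[OF C] setmul_add by metis
  qed
qed

lemma eps_image_commute:
  assumes "C \<in> carrier Q" "a \<in> eps G S ` C" "b \<in> eps G S ` C"
  shows "a * b = b * a"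
proof -
  obtain g h where "g \<in> C" "h \<in> C" "a = eps G S g" "b = eps G S h" using assms(2,3) by blast
  then show ?thesis using eps_eps_commute coset_subset_carrier[OF assms(1)] by blast
qed

lemma E_commute: "C \<in> carrier Q \<Longrightarrow> a \<in> E C \<Longrightarrow> b \<in> E C \<Longrightarrow> a * b = b * a"
  by (rule joins_pairwise_commute[OF eps_image_commute])

lemma E_idem: "C \<in> carrier Q \<Longrightarrow> a \<in> E C \<Longrightarrow> a * a = a"
  using joins_idem[of "eps G S ` C" a] eps_image_commute eps_idem coset_subset_carrier by blast

lemma has_unit_in_E_homogeneous_product:
  assumes C: "C \<in> carrier Q" and x: "x \<in> S g" "g \<in> C" and y: "y \<in> S h" "h \<in> inv\<^bsub>Q\<^esub> C"
  shows "has_unit_in (E C) (x * y)"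
proof -
  have g: "g \<in> carrier G" using x coset_subset_carrier[OF C] by blast
  have h: "h \<in> carrier G" using y coset_subset_carrier[OF Q_inv_closed[OF C]] by blast
  let ?f = "idem_join (eps G S g) (eps G S (inv h))"
  have eps_E: "eps G S g \<in> E C" "eps G S (inv h) \<in> E C"
    using x(2) inv_mem_of_mem_inv_Q[OF C y(2)] by (auto intro: joins.base)
  then have c: "eps G S g * eps G S (inv h) = eps G S (inv h) * eps G S g"
    using E_commute[OF C] by blast
  have "?f * x = x" using idem_join_left_unit1[OF c eps_left_unit[OF g x(1)]] .
  then have "?f * (x * y) = x * y" by (simp only: mult.assoc[symmetric])
  moreover have "y * ?f = y" using idem_join_right_unit2[OF c eps_inv_right_unit[OF h y(1)]] .
  then have "(x * y) * ?f = x * y" by (simp only: mult.assoc)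
  ultimately show ?thesis unfolding has_unit_in_def using joins.join[OF eps_E] by blast
qed

lemma has_unit_in_E:
  assumes C: "C \<in> carrier Q" and r: "r \<in> R C"
  shows "has_unit_in (E C) r"
proof -
  obtain g where "g \<in> C" using coset_nonempty[OF C] by blast
  then have zero: "has_unit_in (E C) 0" by (intro has_unit_in_zero joins.base) blast
  have add: "has_unit_in (E C) (a + b)" if "has_unit_in (E C) a" "has_unit_in (E C) b" for a b
    by (rule has_unit_in_add[OF E_commute[OF C] joins.join that])
  have prod: "has_unit_in (E C) (a * b)" if a: "a \<in> T C" and b: "b \<in> T (inv\<^bsub>Q\<^esub> C)" for a b
    using a unfolding induced_grading_def
  proof (induction rule: fin_sums_induct)
    case (base x)
    then obtain g where x: "x \<in> S g" "g \<in> C" by blast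
    from b show ?case unfolding induced_grading_def
    proof (induction rule: fin_sums_induct)
      case (base y)
      then show ?case using has_unit_in_E_homogeneous_product[OF C x] by blast
    qed (simp_all add: zero add distrib_left)
  qed (simp_all add: zero add distrib_right)
  from r show ?thesis
    by (induction rule: setmul_induct) (simp_all add: zero add prod)
qed

lemma local_units_E:
  assumes C: "C \<in> carrier Q"
  shows "local_units (R C) (E C)"
  unfolding local_units_def
proof (intro conjI ballI)
  show "E C \<subseteq> idempotents (R C)"
    unfolding idempotents_def using E_subset_R[OF C] E_idem[OF C] by blast
qed (use E_commute[OF C] joins.join has_unit_in_E[OF C] in \<open>auto simp: has_unit_in_def\<close>)

end

theorem theorem5p15:
  fixes G :: "('g, 'm) monoid_scheme" and N :: "'g set" and S :: "'g \<Rightarrow> 'a::ring set"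
  assumes "group G" and "N \<lhd> G" and "epsilon_strong G S"
  shows "(\<forall>C\<in>carrier (G Mod N).
            local_units (setmul (induced_grading S C) (induced_grading S (inv\<^bsub>G Mod N\<^esub> C)))
                        (joins (eps G S ` C)))
         \<and> essentially_epsilon_strong (G Mod N) (induced_grading S)
         \<and> ((\<forall>C\<in>carrier (G Mod N).
            no_infinite_chain (joins (eps G S ` C)) \<and>
            pairwise_orthogonal (maximal_elements (joins (eps G S ` C))))
         \<longrightarrow> virtually_epsilon_strong (G Mod N) (induced_grading S))"
proof (intro conjI impI)
  have grading: "epsilon_strongly_graded_normal G S N"
    by (intro epsilon_strongly_graded_normal.intro epsilon_strongly_graded.intro
        epsilon_strongly_graded_axioms.intro epsilon_strongly_graded_normal_axioms.intro assms)
  note symmetric = epsilon_strongly_graded_normal.T_symmetric[OF grading]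
  note local_units = epsilon_strongly_graded_normal.local_units_E[OF grading]
  show "\<forall>C\<in>carrier (G Mod N). local_units (setmul (induced_grading S C)
      (induced_grading S (inv\<^bsub>G Mod N\<^esub> C))) (joins (eps G S ` C))"
    using local_units by (rule ballI)
  show "essentially_epsilon_strong (G Mod N) (induced_grading S)"
    unfolding essentially_epsilon_strong_def has_local_units_def
    using symmetric local_units by (intro conjI ballI exI)
  show "virtually_epsilon_strong (G Mod N) (induced_grading S)"
    if "\<forall>C\<in>carrier (G Mod N). no_infinite_chain (joins (eps G S ` C)) \<and>
          pairwise_orthogonal (maximal_elements (joins (eps G S ` C)))"
    unfolding virtually_epsilon_strong_def
  proof (intro conjI ballI symmetric)
    fix C assume "C \<in> carrier (G Mod N)"
    then show "enough_idempotents (setmul (induced_grading S C) (induced_grading S (inv\<^bsub>G Mod N\<^esub> C)))"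
      using enough_idempotentsI[OF local_units] that by blast
  qed
qed

end
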